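(* Let $X\in\mathbb{R}^{d\times d}$ be positive definite with eigenvalues $\gamma_1\geqslant\dots\geqslant\gamma_d$ satisfying $\lambda\leqslant\gamma_i\leqslant\Lambda$, where $0<\lambda\leqslant\Lambda$. Set $\mu=\frac{4}{(\sqrt\lambda+\sqrt\Lambda)^2}$, $\beta=\big(\frac{\sqrt\Lambda-\sqrt\lambda}{\sqrt\Lambda+\sqrt\lambda}\big)^2$, and for $i\in\{1,\dots,d\}$ let $X^{(i)}_{\mu,\beta}=\begin{bmatrix}1+\beta-\mu\gamma_i & -\beta\\ 1 & 0\end{bmatrix}$. Then $$\max_{i\in\{1,\dots,d\}}\frac{\|X^{(i)}_{\mu,\beta}\|_2^2}{\|(X^{(i)}_{\mu,\beta})^2\|_2}\leqslant\frac1\beta\,(1+4\beta+\beta^2).$$ *)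

theory Defs
  imports "HOL-Analysis.Analysis"
begin

definition mat_eigenvalue :: "real^'n^'n \<Rightarrow> real \<Rightarrow> bool" where
  "mat_eigenvalue A g \<longleftrightarrow> (\<exists>v. v \<noteq> 0 \<and> A *v v = g *\<^sub>R v)"

definition pos_def :: "real^'n^'n \<Rightarrow> bool" where
  "pos_def A \<longleftrightarrow> transpose A = A \<and> (\<forall>x. x \<noteq> 0 \<longrightarrow> x \<bullet> (A *v x) > 0)"

definition spec_norm :: "real^'n^'m \<Rightarrow> real" where
  "spec_norm A = onorm (\<lambda>v. A *v v)"

definition iter_mat :: "real \<Rightarrow> real \<Rightarrow> real \<Rightarrow> real^2^2" where
  "iter_mat mu beta g = vector [vector [1 + beta - mu * g, - beta], vector [1, 0]]"

end

theory Submission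
  imports Defs
begin

text \<open>
  Let \<open>a = 1 + \<beta> - \<mu>\<gamma>\<close> be the top left entry of \<open>X\<^sub>\<mu>\<^sub>,\<^sub>\<beta>\<close> (for an eigenvalue \<open>\<gamma>\<close> of \<open>X\<close>).
  The choice of \<open>\<mu>\<close> and \<open>\<beta>\<close> makes \<open>|a| \<le> 2\<surd>\<beta>\<close> for every \<open>\<gamma> \<in> [\<lambda>, \<Lambda>]\<close>. The squared
  spectral norm of \<open>X\<^sub>\<mu>\<^sub>,\<^sub>\<beta>\<close> is at most its squared Frobenius norm
  \<open>a\<^sup>2 + \<beta>\<^sup>2 + 1 \<le> 1 + 4\<beta> + \<beta>\<^sup>2\<close>, while the spectral norm of its square is at least
  the modulus \<open>\<beta>\<close> of the lower right entry of the square. When \<open>\<beta> = 0\<close> also \<open>a = 0\<close>,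
  the square vanishes and both sides are \<open>0\<close> by the convention \<open>x / 0 = 0\<close>.
\<close>

lemma norm_matrix_vector_mult_le:
  fixes A :: "real^'n^'m"
  shows "norm (A *v x) \<le> norm A * norm x"
proof -
  have "norm (A *v x) = L2_set (\<lambda>i. \<bar>A $ i \<bullet> x\<bar>) UNIV"
    by (simp add: norm_vec_def matrix_mult_dot)
  also have "\<dots> \<le> L2_set (\<lambda>i. norm (A $ i) * norm x) UNIV"
    by (intro L2_set_mono) (auto simp: Cauchy_Schwarz_ineq2)
  also have "\<dots> = norm A * norm x"
    by (simp add: norm_vec_def L2_set_left_distrib)
  finally show ?thesis .
qed

lemma spec_norm_le_norm: "spec_norm A \<le> norm A"
  unfolding spec_norm_def by (intro onorm_le norm_matrix_vector_mult_le)

lemma spec_norm_nonneg: "0 \<le> spec_norm A"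
  unfolding spec_norm_def by (intro onorm_pos_le matrix_vector_mul_bounded_linear)

lemma abs_entry_le_spec_norm: "\<bar>A $ i $ j\<bar> \<le> spec_norm A"
  unfolding spec_norm_def by (rule matrix_component_le_onorm)

lemma spec_norm_zero [simp]: "spec_norm 0 = 0"
proof -
  have "(*v) (0::real^'n^'m) = (\<lambda>x. 0)" by (simp add: fun_eq_iff)
  then show ?thesis by (simp add: spec_norm_def onorm_zero)
qed

lemma norm_iter_mat_squared:
  "(norm (iter_mat mu beta g))\<^sup>2 = (1 + beta - mu * g)\<^sup>2 + beta\<^sup>2 + 1"
  unfolding power2_norm_eq_inner by (simp add: inner_vec_def sum_2 iter_mat_def power2_eq_square)

lemma iter_mat_squared:
  assumes "a = 1 + beta - mu * g"
  shows "iter_mat mu beta g ** iter_mat mu beta g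
           = vector [vector [a\<^sup>2 - beta, - a * beta], vector [a, - beta]]"
  unfolding assms
  by (simp add: iter_mat_def matrix_matrix_mult_def sum_2 vec_eq_iff forall_2 power2_eq_square
      algebra_simps)

lemma iter_mat_norm_ratio_le:
  assumes "(1 + beta - mu * g)\<^sup>2 \<le> 4 * beta"
  shows "(spec_norm (iter_mat mu beta g))\<^sup>2 / spec_norm (iter_mat mu beta g ** iter_mat mu beta g)
           \<le> (1 / beta) * (1 + 4 * beta + beta\<^sup>2)"
proof (cases "beta = 0")
  case True
  with assms have "1 + beta - mu * g = 0" by simp
  then have "iter_mat mu beta g ** iter_mat mu beta g = 0"
    using True iter_mat_squared by (simp add: vec_eq_iff forall_2)
  with True show ?thesis by simp
next
  case False
  moreover have "0 \<le> beta" using assms zero_le_power2[of "1 + beta - mu * g"] by linarith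
  ultimately have beta_pos: "0 < beta" by simp
  have "(spec_norm (iter_mat mu beta g))\<^sup>2 \<le> (norm (iter_mat mu beta g))\<^sup>2"
    using spec_norm_le_norm spec_norm_nonneg by (rule power_mono)
  also have "\<dots> \<le> 1 + 4 * beta + beta\<^sup>2"
    using assms by (simp add: norm_iter_mat_squared)
  finally have numerator: "(spec_norm (iter_mat mu beta g))\<^sup>2 \<le> 1 + 4 * beta + beta\<^sup>2" .
  have "beta = \<bar>(iter_mat mu beta g ** iter_mat mu beta g) $ 2 $ 2\<bar>"
    using beta_pos by (simp add: iter_mat_squared)
  also have "\<dots> \<le> spec_norm (iter_mat mu beta g ** iter_mat mu beta g)"
    by (rule abs_entry_le_spec_norm)
  finally have denominator: "beta \<le> spec_norm (iter_mat mu beta g ** iter_mat mu beta g)" .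
  have "(spec_norm (iter_mat mu beta g))\<^sup>2 / spec_norm (iter_mat mu beta g ** iter_mat mu beta g)
          \<le> (1 + 4 * beta + beta\<^sup>2) / beta"
    using numerator beta_pos denominator by (intro frac_le) simp_all
  then show ?thesis by simp
qed

text \<open>Here \<open>s = \<surd>\<lambda>\<close> and \<open>t = \<surd>\<Lambda>\<close>.\<close>

lemma momentum_coefficient_bound:
  fixes s t g :: real
  assumes "0 < s" "0 \<le> t" "s\<^sup>2 \<le> g" "g \<le> t\<^sup>2"
  shows "(1 + ((t - s) / (t + s))\<^sup>2 - 4 / (s + t)\<^sup>2 * g)\<^sup>2 \<le> 4 * ((t - s) / (t + s))\<^sup>2"
proof -
  have sum_pos: "0 < s + t" using assms by simp
  have "(s + t)\<^sup>2 + (t - s)\<^sup>2 = 2 * s\<^sup>2 + 2 * t\<^sup>2"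
    by (simp add: power2_eq_square algebra_simps)
  moreover have "1 + ((t - s) / (t + s))\<^sup>2 - 4 / (s + t)\<^sup>2 * g
      = ((s + t)\<^sup>2 + (t - s)\<^sup>2 - 4 * g) / (s + t)\<^sup>2"
    using sum_pos by (simp add: add.commute[of t s] field_simps)
  ultimately have "1 + ((t - s) / (t + s))\<^sup>2 - 4 / (s + t)\<^sup>2 * g
      = (2 * s\<^sup>2 + 2 * t\<^sup>2 - 4 * g) / (s + t)\<^sup>2"
    by simp
  moreover have "\<bar>2 * s\<^sup>2 + 2 * t\<^sup>2 - 4 * g\<bar> \<le> 2 * (t - s) * (s + t)"
    using assms by (simp add: abs_le_iff power2_eq_square algebra_simps)
  ultimately have "\<bar>1 + ((t - s) / (t + s))\<^sup>2 - 4 / (s + t)\<^sup>2 * g\<bar> \<le> 2 * ((t - s) / (t + s))"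
    using sum_pos by (simp add: pos_divide_le_eq power2_eq_square add.commute)
  then have "(1 + ((t - s) / (t + s))\<^sup>2 - 4 / (s + t)\<^sup>2 * g)\<^sup>2 \<le> (2 * ((t - s) / (t + s)))\<^sup>2"
    by (metis abs_ge_zero power2_abs power_mono)
  also have "\<dots> = 4 * ((t - s) / (t + s))\<^sup>2"
    by (simp only: power_mult_distrib) simp
  finally show ?thesis .
qed

theorem lemmaA4:
  fixes X :: "real^'d^'d" and lam Lam :: real
  assumes "pos_def X"
    and "0 < lam" and "lam \<le> Lam"
    and "\<And>g. mat_eigenvalue X g \<Longrightarrow> lam \<le> g \<and> g \<le> Lam"
  shows "let mu = 4 / (sqrt lam + sqrt Lam)^2;
             beta = ((sqrt Lam - sqrt lam) / (sqrt Lam + sqrt lam))^2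
         in \<forall>g. mat_eigenvalue X g \<longrightarrow>
              (spec_norm (iter_mat mu beta g))^2 / spec_norm (iter_mat mu beta g ** iter_mat mu beta g)
                \<le> (1 / beta) * (1 + 4 * beta + beta^2)"
  unfolding Let_def
proof (intro allI impI iter_mat_norm_ratio_le)
  fix g assume "mat_eigenvalue X g"
  then have "(sqrt lam)\<^sup>2 \<le> g" "g \<le> (sqrt Lam)\<^sup>2"
    using assms(2-4) by auto
  with assms(2,3) show "(1 + ((sqrt Lam - sqrt lam) / (sqrt Lam + sqrt lam))\<^sup>2
      - 4 / (sqrt lam + sqrt Lam)\<^sup>2 * g)\<^sup>2 \<le> 4 * ((sqrt Lam - sqrt lam) / (sqrt Lam + sqrt lam))\<^sup>2"
    by (intro momentum_coefficient_bound) auto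
qed

end
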